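(* Let $c\in(0,1)$ and $t\in\mathbb{N}$. There exist $n_0$ and $C>0$ depending on $c$ and $t$ such that for all $n\ge n_0$: if $\mathcal{F}\subseteq\mathcal{M}_{2n}$ is a $t$-intersecting family with $|\mathcal{F}|\ge c(2(n-t)-1)!!$, then there is a set $T$ of $t$ pairwise disjoint edges of $K_{2n}$ such that \[|\mathcal{F}\setminus\mathcal{F}\!\downarrow_T| \le C\,(2(n-t-1)-1)!!,\] i.e. $|\mathcal{F}\setminus\mathcal{F}\!\downarrow_T| = O((2(n-t-1)-1)!!)$.
   Context: $\mathcal{M}_{2n}$ is the set of perfect matchings of $K_{2n}$. A family $\mathcal{F}$ is $t$-intersecting if $|m\cap m'|\ge t$ for all $m,m'\in\mathcal{F}$. For a set $S$ of disjoint edges, $\mathcal{F}\!\downarrow_S=\{m\in\mathcal{F}: S\subseteq m\}$. $(2k-1)!!=1\cdot3\cdots(2k-1)$. *)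

theory Defs
  imports Complex_Main "HOL-Library.Disjoint_Sets"
begin

definition edges_K :: "nat \<Rightarrow> nat set set" where
  "edges_K n = {e. e \<subseteq> {0..<2*n} \<and> card e = 2}"

definition disjoint_edges :: "nat \<Rightarrow> nat set set \<Rightarrow> bool" where
  "disjoint_edges n S \<longleftrightarrow> S \<subseteq> edges_K n \<and> disjoint S"

definition perfect_matchings :: "nat \<Rightarrow> nat set set set" where
  "perfect_matchings n = {m. disjoint_edges n m \<and> \<Union>m = {0..<2*n}}"

definition t_intersecting :: "nat \<Rightarrow> nat set set set \<Rightarrow> bool" where
  "t_intersecting t F \<longleftrightarrow> (\<forall>m\<in>F. \<forall>m'\<in>F. card (m \<inter> m') \<ge> t)"

definition restrict_fam :: "nat set set set \<Rightarrow> nat set set \<Rightarrow> nat set set set" where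
  "restrict_fam F S = {m\<in>F. S \<subseteq> m}"

text \<open>odd_dfact k = (2k-1)!! = 1*3*...*(2k-1); odd_dfact 0 = (-1)!! = 1.\<close>
definition odd_dfact :: "nat \<Rightarrow> nat" where
  "odd_dfact k = (\<Prod>i<k. 2*i+1)"

end

theory Submission
  imports Defs "HOL-Real_Asymp.Real_Asymp" "HOL-Library.Discrete_Functions"
begin

(* Spread approximation. Put r = 5n/4 and q = t + 4(t+1)(log n + 2). Repeatedly pick, among sets
   S of at most q+1 edges, one maximising r^|S| |F(S)|: by maximality F(S) is r-spread outside S
   and |S| \<le> q (the case |S| = q+1 is too small), so F splits into spread pieces F(S) plus a
   remainder of at most (2(n-t-1)-1)!! matchings. A double count shows that two spread pieces
   contain matchings meeting only inside S \<inter> S', hence the cores S pairwise share t edges.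
   If all cores contain a common set T of t edges, then F - F(T) lies in the remainder.
   Otherwise every covered matching contains one of at most q^(t+1) sets of t+1 edges, so
   |F| \<le> (1 + q^(t+1)) (2(n-t-1)-1)!!, which is below c (2(n-t)-1)!! for large n. *)

section \<open>Perfect matchings\<close>

definition perfect_matchings_on :: "'a set \<Rightarrow> 'a set set set" where
  "perfect_matchings_on V = {m. (\<forall>e\<in>m. e \<subseteq> V \<and> card e = 2) \<and> disjoint m \<and> \<Union>m = V}"

lemma perfect_matchings_eq_on: "perfect_matchings n = perfect_matchings_on {0..<2*n}"
  by (auto simp: perfect_matchings_def perfect_matchings_on_def disjoint_edges_def edges_K_def)

lemma finite_perfect_matchings_on: "finite V \<Longrightarrow> finite (perfect_matchings_on V)"
  by (rule finite_subset[of _ "Pow (Pow V)"]) (auto simp: perfect_matchings_on_def)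

lemma Diff_in_perfect_matchings_on:
  assumes m: "m \<in> perfect_matchings_on V" and S: "S \<subseteq> m"
  shows "m - S \<in> perfect_matchings_on (V - \<Union>S)"
proof -
  have edges: "\<forall>e\<in>m. e \<subseteq> V \<and> card e = 2" and "disjoint m" and cover: "\<Union>m = V"
    using m by (simp_all add: perfect_matchings_on_def)
  then have "disjnt e s" if "e \<in> m - S" "s \<in> S" for e s
    using S that by (metis DiffD1 DiffD2 pairwise_def subsetD)
  then have outside: "e \<inter> \<Union>S = {}" if "e \<in> m - S" for e
    using that by (auto simp: disjnt_def)
  have "\<Union>(m - S) \<subseteq> V - \<Union>S"
    using edges outside by blast
  moreover have "V - \<Union>S \<subseteq> \<Union>(m - S)"
    using cover by blast
  moreover have "disjoint (m - S)"
    using \<open>disjoint m\<close> by (rule pairwise_subset) blast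
  ultimately show ?thesis
    using edges outside by (auto simp: perfect_matchings_on_def)
qed

lemma card_Union_subset_perfect_matching:
  assumes "finite V" and m: "m \<in> perfect_matchings_on V" and "S \<subseteq> m"
  shows "card (\<Union>S) = 2 * card S"
proof -
  have edges: "e \<subseteq> V \<and> card e = 2" if "e \<in> S" for e
    using assms that by (auto simp: perfect_matchings_on_def)
  have "pairwise disjnt S"
    using assms pairwise_subset by (auto simp: perfect_matchings_on_def)
  moreover have "finite e" if "e \<in> S" for e
    using edges[OF that] by (metis card.infinite zero_neq_numeral)
  ultimately have "card (\<Union>S) = sum card S"
    by (rule card_Union_disjoint)
  also have "\<dots> = sum (\<lambda>_. 2) S"
    using edges by (intro sum.cong) auto
  finally show ?thesis
    by simp
qed

lemma odd_dfact_Suc: "odd_dfact (Suc k) = (2*k+1) * odd_dfact k"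
  by (simp add: odd_dfact_def)

lemma perfect_matchings_on_subset_image:
  assumes "v \<in> V"
  shows "perfect_matchings_on V
    \<subseteq> (\<lambda>(w,m'). insert {v,w} m') ` (SIGMA w:V-{v}. perfect_matchings_on (V-{v,w}))"
proof
  fix m assume m: "m \<in> perfect_matchings_on V"
  then obtain e where e: "e \<in> m" "v \<in> e" "e \<subseteq> V" "card e = 2"
    using assms by (auto simp: perfect_matchings_on_def)
  then obtain w where w: "e = {v,w}" "w \<in> V - {v}"
    by (auto simp: card_2_iff)
  have "m - {e} \<in> perfect_matchings_on (V - {v,w})"
    using Diff_in_perfect_matchings_on[OF m, of "{e}"] e w by simp
  moreover have "m = insert {v,w} (m - {e})"
    using e w by auto
  ultimately show "m \<in> (\<lambda>(w,m'). insert {v,w} m') ` (SIGMA w:V-{v}. perfect_matchings_on (V-{v,w}))"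
    using w by (intro image_eqI[where x="(w, m - {e})"]) auto
qed

lemma card_perfect_matchings_on_le:
  "finite V \<Longrightarrow> card V = 2*k \<Longrightarrow> card (perfect_matchings_on V) \<le> odd_dfact k"
proof (induction k arbitrary: V)
  case 0
  then have "perfect_matchings_on V \<subseteq> {{}}"
    by (auto simp: perfect_matchings_on_def)
  then have "card (perfect_matchings_on V) \<le> card {{}::'a set set}"
    by (intro card_mono) auto
  then show ?case
    by (simp add: odd_dfact_def)
next
  case (Suc k)
  then have "V \<noteq> {}"
    by auto
  then obtain v where v: "v \<in> V"
    by blast
  let ?A = "SIGMA w:V-{v}. perfect_matchings_on (V-{v,w})"
  let ?f = "\<lambda>(w,m'). insert {v,w} m'"
  have "finite ?A"
    using Suc.prems by (auto intro: finite_perfect_matchings_on)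
  have "card (perfect_matchings_on V) \<le> card (?f ` ?A)"
    by (rule card_mono[OF finite_imageI[OF \<open>finite ?A\<close>] perfect_matchings_on_subset_image[OF v]])
  also have "\<dots> \<le> card ?A"
    by (rule card_image_le[OF \<open>finite ?A\<close>])
  also have "card ?A = (\<Sum>w\<in>V-{v}. card (perfect_matchings_on (V-{v,w})))"
    using Suc.prems by (intro card_SigmaI) (auto intro: finite_perfect_matchings_on)
  also have "\<dots> \<le> (\<Sum>w\<in>V-{v}. odd_dfact k)"
  proof (rule sum_mono)
    fix w assume "w \<in> V - {v}"
    then have "card {v,w} = 2"
      by (metis DiffE card_2_iff singletonI)
    then have "card (V - {v,w}) = 2*k"
      using Suc.prems v \<open>w \<in> V - {v}\<close> by (simp add: card_Diff_subset)
    then show "card (perfect_matchings_on (V-{v,w})) \<le> odd_dfact k"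
      using Suc by simp
  qed
  also have "\<dots> = odd_dfact (Suc k)"
    using Suc.prems v by (simp add: odd_dfact_Suc)
  finally show ?case .
qed

lemma card_perfect_matchings_on_containing_le:
  assumes V: "finite V" "card V = 2*k"
  shows "card {m \<in> perfect_matchings_on V. S \<subseteq> m} \<le> odd_dfact (k - card S)"
proof (cases "{m \<in> perfect_matchings_on V. S \<subseteq> m} = {}")
  case False
  then obtain m0 where m0: "m0 \<in> perfect_matchings_on V" "S \<subseteq> m0"
    by auto
  have "\<Union>S \<subseteq> V"
    using m0 by (auto simp: perfect_matchings_on_def)
  then have card_rest: "card (V - \<Union>S) = 2 * (k - card S)"
    using card_Union_subset_perfect_matching[OF V(1) m0] V
    by (simp add: card_Diff_subset finite_subset)
  have "inj_on (\<lambda>m. m - S) {m \<in> perfect_matchings_on V. S \<subseteq> m}"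
    by (rule inj_onI) (auto simp: set_eq_iff)
  moreover have "(\<lambda>m. m - S) ` {m \<in> perfect_matchings_on V. S \<subseteq> m}
      \<subseteq> perfect_matchings_on (V - \<Union>S)"
    by (auto intro: Diff_in_perfect_matchings_on)
  ultimately have "card {m \<in> perfect_matchings_on V. S \<subseteq> m}
      \<le> card (perfect_matchings_on (V - \<Union>S))"
    by (rule card_inj_on_le) (simp add: V(1) finite_perfect_matchings_on)
  also have "\<dots> \<le> odd_dfact (k - card S)"
    using card_rest V by (intro card_perfect_matchings_on_le) auto
  finally show ?thesis .
qed (metis card.empty zero_le)

lemma finite_edges_K: "finite (edges_K n)"
  by (rule finite_subset[of _ "Pow {0..<2*n}"]) (auto simp: edges_K_def)

lemma finite_perfect_matchings: "finite (perfect_matchings n)"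
  by (simp add: perfect_matchings_eq_on finite_perfect_matchings_on)

lemma finite_subset_perfect_matchings: "F \<subseteq> perfect_matchings n \<Longrightarrow> finite F"
  by (rule finite_subset[OF _ finite_perfect_matchings])

lemma card_restrict_fam_le:
  assumes "F \<subseteq> perfect_matchings n"
  shows "card (restrict_fam F S) \<le> odd_dfact (n - card S)"
proof -
  have "card (restrict_fam F S) \<le> card {m \<in> perfect_matchings_on {0..<2*n}. S \<subseteq> m}"
    using assms by (intro card_mono)
      (auto simp: restrict_fam_def perfect_matchings_eq_on finite_perfect_matchings_on)
  also have "\<dots> \<le> odd_dfact (n - card S)"
    by (rule card_perfect_matchings_on_containing_le) auto
  finally show ?thesis .
qed

lemma card_perfect_matching: "m \<in> perfect_matchings n \<Longrightarrow> card m = n"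
  using card_Union_subset_perfect_matching[of "{0..<2*n}" m m]
  by (simp add: perfect_matchings_eq_on perfect_matchings_on_def)

lemma finite_perfect_matching: "m \<in> perfect_matchings n \<Longrightarrow> finite m"
  by (rule finite_subset[of _ "Pow {0..<2*n}"]) (auto simp: perfect_matchings_eq_on perfect_matchings_on_def)

lemma disjoint_edges_subset_perfect_matching:
  assumes "m \<in> perfect_matchings n" and "T \<subseteq> m"
  shows "disjoint_edges n T"
proof -
  have "m \<subseteq> edges_K n" and "disjoint m"
    using assms(1) by (simp_all add: perfect_matchings_def disjoint_edges_def)
  then show ?thesis
    using assms(2) pairwise_subset[of disjnt m T] by (auto simp: disjoint_edges_def)
qed

section \<open>Spread families\<close>

text \<open>Only singletons outside S are constrained: r |G(S \<union> {e})| \<le> |G(S)| for e \<notin> S, which is all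
  that the pairing argument uses of the paper's r-spreadness.\<close>
definition spread :: "real \<Rightarrow> 'a set \<Rightarrow> 'a set set \<Rightarrow> bool" where
  "spread r S G \<longleftrightarrow> (\<forall>e. e \<notin> S \<longrightarrow> r * real (card {g\<in>G. e \<in> g}) \<le> real (card G))"

lemma sum_card_members_containing:
  assumes "finite G" and "\<forall>g\<in>G. finite g"
  shows "(\<Sum>e\<in>\<Union>G. card {g\<in>G. e \<in> g}) = (\<Sum>g\<in>G. card g)"
proof (rule sum_multicount_gen)
  have "{e \<in> \<Union>G. e \<in> g} = g" if "g \<in> G" for g
    using that by blast
  then show "\<forall>g\<in>G. card {e \<in> \<Union>G. e \<in> g} = card g"
    by simp
qed (use assms in auto)

lemma card_pairs_sharing_outside_le:
  fixes G1 G2 :: "'a set set"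
  assumes "finite G1" and G1: "\<forall>g\<in>G1. finite g \<and> card g \<le> n" and sp: "spread r S G2"
    and "r \<ge> 0"
  shows "r * card (\<Union>e\<in>\<Union>G1 - S. {g\<in>G1. e \<in> g} \<times> {g\<in>G2. e \<in> g}) \<le> real n * card G1 * card G2"
proof -
  let ?D1 = "\<lambda>e. {g\<in>G1. e \<in> g}" and ?D2 = "\<lambda>e. {g\<in>G2. e \<in> g}"
  have "finite (\<Union>G1)"
    using assms(1) G1 by (simp add: finite_Union)
  have "card (\<Union>e\<in>\<Union>G1 - S. ?D1 e \<times> ?D2 e) \<le> (\<Sum>e\<in>\<Union>G1 - S. card (?D1 e) * card (?D2 e))"
    using card_UN_le[of "\<Union>G1 - S" "\<lambda>e. ?D1 e \<times> ?D2 e"] \<open>finite (\<Union>G1)\<close>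
    by (simp add: card_cartesian_product)
  then have "real (card (\<Union>e\<in>\<Union>G1 - S. ?D1 e \<times> ?D2 e))
      \<le> (\<Sum>e\<in>\<Union>G1 - S. real (card (?D1 e)) * card (?D2 e))"
    unfolding of_nat_le_iff[symmetric, where 'a=real] by (simp only: of_nat_sum of_nat_mult)
  then have "r * card (\<Union>e\<in>\<Union>G1 - S. ?D1 e \<times> ?D2 e)
      \<le> r * (\<Sum>e\<in>\<Union>G1 - S. real (card (?D1 e)) * card (?D2 e))"
    by (rule mult_left_mono[OF _ \<open>r \<ge> 0\<close>])
  also have "\<dots> = (\<Sum>e\<in>\<Union>G1 - S. card (?D1 e) * (r * card (?D2 e)))"
    by (simp add: sum_distrib_left algebra_simps)
  also have "\<dots> \<le> (\<Sum>e\<in>\<Union>G1 - S. real (card (?D1 e)) * card G2)"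
    using sp by (intro sum_mono mult_left_mono) (auto simp: spread_def)
  also have "\<dots> \<le> (\<Sum>e\<in>\<Union>G1. real (card (?D1 e)) * card G2)"
    using \<open>finite (\<Union>G1)\<close> by (intro sum_mono2) auto
  also have "\<dots> = (\<Sum>g\<in>G1. real (card g)) * card G2"
  proof -
    have "(\<Sum>e\<in>\<Union>G1. card (?D1 e)) = (\<Sum>g\<in>G1. card g)"
      using assms(1) G1 by (simp add: sum_card_members_containing)
    then have double_count: "(\<Sum>e\<in>\<Union>G1. real (card (?D1 e))) = (\<Sum>g\<in>G1. real (card g))"
      unfolding of_nat_sum[symmetric] by (rule arg_cong)
    show ?thesis
      by (simp only: double_count flip: sum_distrib_right)
  qed
  also have "\<dots> \<le> real n * card G1 * card G2"
    using G1 sum_bounded_above[of G1 "\<lambda>g. real (card g)" "real n"]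
    by (intro mult_right_mono) (auto simp: mult.commute)
  finally show ?thesis .
qed

lemma card_pairs_sharing_inside_le:
  fixes G1 G2 :: "'a set set"
  assumes sp: "spread r S1 G1" and "finite S2" and "r \<ge> 0"
  shows "r * card (\<Union>e\<in>S2 - S1. {g\<in>G1. e \<in> g} \<times> G2) \<le> real (card S2) * card G1 * card G2"
proof -
  let ?D1 = "\<lambda>e. {g\<in>G1. e \<in> g}"
  have "card (\<Union>e\<in>S2 - S1. ?D1 e \<times> G2) \<le> (\<Sum>e\<in>S2 - S1. card (?D1 e) * card G2)"
    using card_UN_le[of "S2 - S1" "\<lambda>e. ?D1 e \<times> G2"] \<open>finite S2\<close>
    by (simp add: card_cartesian_product)
  then have "real (card (\<Union>e\<in>S2 - S1. ?D1 e \<times> G2)) \<le> (\<Sum>e\<in>S2 - S1. real (card (?D1 e)) * card G2)"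
    unfolding of_nat_le_iff[symmetric, where 'a=real] by (simp only: of_nat_sum of_nat_mult)
  then have "r * card (\<Union>e\<in>S2 - S1. ?D1 e \<times> G2) \<le> r * (\<Sum>e\<in>S2 - S1. real (card (?D1 e)) * card G2)"
    by (rule mult_left_mono[OF _ \<open>r \<ge> 0\<close>])
  also have "\<dots> = (\<Sum>e\<in>S2 - S1. (r * card (?D1 e)) * card G2)"
    by (simp add: sum_distrib_left algebra_simps)
  also have "\<dots> \<le> (\<Sum>e\<in>S2 - S1. real (card G1) * card G2)"
    using sp by (intro sum_mono mult_right_mono) (auto simp: spread_def)
  also have "\<dots> = real (card (S2 - S1)) * card G1 * card G2"
    by (simp add: mult.assoc)
  also have "\<dots> \<le> real (card S2) * card G1 * card G2"
    using \<open>finite S2\<close> card_mono[of S2 "S2 - S1"] by (intro mult_right_mono) auto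
  finally show ?thesis .
qed

text \<open>A pair of members meeting outside S1 \<inter> S2 shares an element e \<notin> S2 or an element of
  S2 - S1; spreadness of G2, resp. G1, bounds the pairs of either kind.\<close>
lemma card_pairs_meeting_outside_cores_le:
  fixes G1 G2 :: "'a set set"
  assumes fin: "finite G1" "finite G2" and G1: "\<forall>g\<in>G1. finite g \<and> card g \<le> n"
    and sp1: "spread r S1 G1" and sp2: "spread r S2 G2" and "finite S2" and "r \<ge> 0"
  shows "r * card {(g1,g2) \<in> G1 \<times> G2. \<not> g1 \<inter> g2 \<subseteq> S1 \<inter> S2}
    \<le> (real n + card S2) * card G1 * card G2"
proof -
  let ?B = "{(g1,g2) \<in> G1 \<times> G2. \<not> g1 \<inter> g2 \<subseteq> S1 \<inter> S2}"
  let ?X = "\<Union>e\<in>\<Union>G1 - S2. {g\<in>G1. e \<in> g} \<times> {g\<in>G2. e \<in> g}"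
    and ?Y = "\<Union>e\<in>S2 - S1. {g\<in>G1. e \<in> g} \<times> G2"
  have "(g1, g2) \<in> ?X \<union> ?Y" if g: "g1 \<in> G1" "g2 \<in> G2" "\<not> g1 \<inter> g2 \<subseteq> S1 \<inter> S2"
    for g1 g2
  proof -
    obtain e where "e \<in> g1" "e \<in> g2" "e \<notin> S1 \<inter> S2"
      using g(3) by blast
    then show ?thesis
      using g by (cases "e \<in> S2") auto
  qed
  then have "?B \<subseteq> ?X \<union> ?Y"
    by blast
  moreover have "finite (?X \<union> ?Y)"
    by (rule finite_subset[of _ "G1 \<times> G2"]) (use fin in auto)
  ultimately have "card ?B \<le> card (?X \<union> ?Y)"
    by (intro card_mono)
  then have "real (card ?B) \<le> real (card ?X) + real (card ?Y)"
    using card_Un_le[of ?X ?Y] by linarith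
  then have "r * card ?B \<le> r * (real (card ?X) + real (card ?Y))"
    by (rule mult_left_mono[OF _ \<open>r \<ge> 0\<close>])
  also have "\<dots> = r * card ?X + r * card ?Y"
    by (rule distrib_left)
  also have "\<dots> \<le> real n * card G1 * card G2 + real (card S2) * card G1 * card G2"
    using card_pairs_sharing_outside_le[OF fin(1) G1 sp2 \<open>r \<ge> 0\<close>]
      card_pairs_sharing_inside_le[OF sp1 \<open>finite S2\<close> \<open>r \<ge> 0\<close>]
    by (rule add_mono)
  also have "\<dots> = (real n + card S2) * card G1 * card G2"
    by (simp add: distrib_right)
  finally show ?thesis .
qed

lemma spread_families_meet_inside_cores:
  fixes G1 G2 :: "'a set set"
  assumes fin: "finite G1" "finite G2" and G1: "\<forall>g\<in>G1. finite g \<and> card g \<le> n"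
    and ne: "G1 \<noteq> {}" "G2 \<noteq> {}"
    and sp: "spread r S1 G1" "spread r S2 G2" and "finite S2" and r: "real n + card S2 < r"
  shows "\<exists>g1\<in>G1. \<exists>g2\<in>G2. g1 \<inter> g2 \<subseteq> S1 \<inter> S2"
proof (rule ccontr)
  assume "\<not> ?thesis"
  then have "{(g1,g2) \<in> G1 \<times> G2. \<not> g1 \<inter> g2 \<subseteq> S1 \<inter> S2} = G1 \<times> G2"
    by auto
  then have "r * (card G1 * card G2) \<le> (real n + card S2) * (card G1 * card G2)"
    using card_pairs_meeting_outside_cores_le[OF fin G1 sp \<open>finite S2\<close>] r
    by (simp add: card_cartesian_product mult.assoc)
  moreover have "real (card G1 * card G2) > 0"
    using ne fin by (simp add: card_gt_0_iff)
  then have "(real n + card S2) * (card G1 * card G2) < r * (card G1 * card G2)"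
    using r by (intro mult_strict_right_mono) auto
  ultimately show False
    by linarith
qed

section \<open>Spread approximation of families of perfect matchings\<close>

definition spread_piece ::
    "nat set set set \<Rightarrow> nat \<Rightarrow> real \<Rightarrow> nat set set \<Rightarrow> nat set set set \<Rightarrow> bool" where
  "spread_piece H q r S G \<longleftrightarrow>
     G \<subseteq> restrict_fam H S \<and> G \<noteq> {} \<and> finite S \<and> card S \<le> q \<and> spread r S G"

lemma spread_piece_mono: "spread_piece H q r S G \<Longrightarrow> H \<subseteq> H' \<Longrightarrow> spread_piece H' q r S G"
  unfolding spread_piece_def restrict_fam_def by blast

lemma spread_restrict_fam_if_maximal:
  fixes r :: real
  assumes H: "H \<subseteq> perfect_matchings n" and "r > 0" and "finite S"
    and max: "\<And>e. e \<in> edges_K n \<Longrightarrow> e \<notin> S \<Longrightarrow>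
      r ^ card (insert e S) * card (restrict_fam H (insert e S)) \<le> r ^ card S * card (restrict_fam H S)"
  shows "spread r S (restrict_fam H S)"
  unfolding spread_def
proof (intro allI impI)
  fix e assume "e \<notin> S"
  let ?G = "restrict_fam H S"
  show "r * card {g \<in> ?G. e \<in> g} \<le> card ?G"
  proof (cases "e \<in> edges_K n")
    case False
    then have "{g \<in> ?G. e \<in> g} = {}"
      using H by (auto simp: restrict_fam_def perfect_matchings_def disjoint_edges_def)
    then have "card {g \<in> ?G. e \<in> g} = 0"
      by (simp only: card.empty)
    then show ?thesis
      by simp
  next
    case True
    have "restrict_fam H (insert e S) = {g \<in> ?G. e \<in> g}"
      by (auto simp: restrict_fam_def)
    then have "r ^ card S * (r * card {g \<in> ?G. e \<in> g}) \<le> r ^ card S * card ?G"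
      using max[OF True \<open>e \<notin> S\<close>] \<open>finite S\<close> \<open>e \<notin> S\<close> by (simp add: ac_simps)
    then show ?thesis
      using \<open>r > 0\<close> by simp
  qed
qed

text \<open>Choosing S with at most q+1 edges that maximises r^|S| |H(S)| makes H(S) spread outside S;
  the size condition on r^(q+1) rules out |S| = q+1.\<close>
lemma exists_spread_piece:
  fixes r \<theta> :: real
  assumes H: "H \<subseteq> perfect_matchings n" and "r > 0"
    and small: "r ^ (q+1) * odd_dfact (n - (q+1)) \<le> \<theta>" and big: "\<theta> < card H"
  shows "\<exists>S. spread_piece H q r S (restrict_fam H S)"
proof -
  define A where "A = {S. S \<subseteq> edges_K n \<and> card S \<le> q+1}"
  define \<phi> where "\<phi> S = r ^ card S * card (restrict_fam H S)" for S
  have "finite A"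
    using finite_edges_K by (auto simp: A_def intro: finite_subset[of _ "Pow (edges_K n)"])
  moreover have "{} \<in> A"
    by (simp add: A_def)
  ultimately have "Max (\<phi> ` A) \<in> \<phi> ` A"
    by (intro Max_in) auto
  then obtain S where "S \<in> A" and S_Max: "\<phi> S = Max (\<phi> ` A)"
    by auto
  have S_max: "\<phi> S' \<le> \<phi> S" if "S' \<in> A" for S'
    unfolding S_Max using \<open>finite A\<close> that by simp
  have S: "S \<subseteq> edges_K n" "card S \<le> q+1" "finite S"
    using \<open>S \<in> A\<close> finite_subset[OF _ finite_edges_K] by (auto simp: A_def)
  let ?G = "restrict_fam H S"
  have "\<phi> {} = card H"
    by (simp add: \<phi>_def restrict_fam_def)
  then have \<phi>_S: "\<phi> S > \<theta>"
    using S_max[OF \<open>{} \<in> A\<close>] big by linarith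
  have "\<theta> \<ge> 0"
    using small \<open>r > 0\<close> by (smt (verit) of_nat_0_le_iff zero_le_mult_iff zero_le_power)
  then have "?G \<noteq> {}"
    using \<phi>_S by (auto simp: \<phi>_def)
  have "card S \<le> q"
  proof (rule ccontr)
    assume "\<not> card S \<le> q"
    then have "card S = q+1"
      using S by simp
    then have "\<phi> S \<le> r ^ (q+1) * odd_dfact (n - (q+1))"
      using card_restrict_fam_le[OF H, of S] \<open>r > 0\<close> by (simp add: \<phi>_def)
    then show False
      using \<phi>_S small by linarith
  qed
  moreover have "spread r S ?G"
  proof (rule spread_restrict_fam_if_maximal[OF H \<open>r > 0\<close> \<open>finite S\<close>])
    fix e assume "e \<in> edges_K n" "e \<notin> S"
    then have "insert e S \<in> A"
      using S \<open>card S \<le> q\<close> by (auto simp: A_def)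
    then show "r ^ card (insert e S) * card (restrict_fam H (insert e S)) \<le> r ^ card S * card ?G"
      using S_max by (simp add: \<phi>_def)
  qed
  ultimately show ?thesis
    using S \<open>?G \<noteq> {}\<close> by (auto simp: spread_piece_def)
qed

lemma spread_approximation:
  fixes r \<theta> :: real
  assumes "H \<subseteq> perfect_matchings n" and "r > 0"
    and small: "r ^ (q+1) * odd_dfact (n - (q+1)) \<le> \<theta>"
  shows "\<exists>\<S>. (\<forall>S\<in>\<S>. \<exists>G. spread_piece H q r S G) \<and> card {m\<in>H. \<forall>S\<in>\<S>. \<not> S \<subseteq> m} \<le> \<theta>"
  using assms(1)
proof (induction "card H" arbitrary: H rule: less_induct)
  case less
  show ?case
  proof (cases "card H \<le> \<theta>")
    case True
    then show ?thesis
      by (intro exI[of _ "{}"]) simp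
  next
    case False
    then obtain S where S: "spread_piece H q r S (restrict_fam H S)"
      using exists_spread_piece[OF less.prems \<open>r > 0\<close> small] by force
    let ?H' = "H - restrict_fam H S"
    have "finite H"
      using less.prems by (rule finite_subset_perfect_matchings)
    then have "card ?H' < card H"
      using S by (intro psubset_card_mono) (auto simp: spread_piece_def restrict_fam_def)
    moreover have "?H' \<subseteq> perfect_matchings n"
      using less.prems by blast
    ultimately obtain \<S> where pieces: "\<forall>S\<in>\<S>. \<exists>G. spread_piece ?H' q r S G"
      and rest: "card {m\<in>?H'. \<forall>S\<in>\<S>. \<not> S \<subseteq> m} \<le> \<theta>"
      using less.hyps by blast
    have "\<exists>G. spread_piece H q r S' G" if "S' \<in> \<S>" for S'
      using pieces that spread_piece_mono[OF _ Diff_subset] by blast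
    moreover have "{m\<in>H. \<forall>S'\<in>insert S \<S>. \<not> S' \<subseteq> m} = {m\<in>?H'. \<forall>S\<in>\<S>. \<not> S \<subseteq> m}"
      by (auto simp: restrict_fam_def)
    ultimately show ?thesis
      using S rest by (intro exI[of _ "insert S \<S>"]) auto
  qed
qed

lemma spread_piece_cores_intersect:
  assumes F: "F \<subseteq> perfect_matchings n" and "t_intersecting t F"
    and P1: "spread_piece F q r S1 G1" and P2: "spread_piece F q r S2 G2"
    and r: "real n + q < r"
  shows "t \<le> card (S1 \<inter> S2)"
proof -
  have G: "G1 \<subseteq> F" "G2 \<subseteq> F"
    using P1 P2 by (auto simp: spread_piece_def restrict_fam_def)
  then have fin: "finite G1" "finite G2"
    using F order_trans finite_subset_perfect_matchings by metis+
  have matchings: "\<forall>g\<in>G1. finite g \<and> card g \<le> n"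
  proof
    fix g assume "g \<in> G1"
    then have "g \<in> perfect_matchings n"
      using G F by blast
    then show "finite g \<and> card g \<le> n"
      by (simp add: finite_perfect_matching card_perfect_matching)
  qed
  have P1': "G1 \<noteq> {}" "spread r S1 G1" "finite S1"
    using P1 by (simp_all add: spread_piece_def)
  have P2': "G2 \<noteq> {}" "spread r S2 G2" "finite S2" "card S2 \<le> q"
    using P2 by (simp_all add: spread_piece_def)
  then have "real n + card S2 < r"
    using r by linarith
  then obtain g1 g2 where g: "g1 \<in> G1" "g2 \<in> G2" "g1 \<inter> g2 \<subseteq> S1 \<inter> S2"
    using spread_families_meet_inside_cores[OF fin matchings P1'(1) P2'(1) P1'(2) P2'(2,3)] by blast
  then have "t \<le> card (g1 \<inter> g2)"
    using G \<open>t_intersecting t F\<close> unfolding t_intersecting_def by blast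
  also have "\<dots> \<le> card (S1 \<inter> S2)"
    using g \<open>finite S1\<close> by (intro card_mono) auto
  finally show ?thesis .
qed

section \<open>Covering t-intersecting families of small sets\<close>

lemma card_subsets_le_power:
  assumes "finite A" and "card A \<le> q"
  shows "card {R. R \<subseteq> A \<and> card R = t} \<le> q ^ t"
proof (cases "t \<le> card A")
  case True
  have "card {R. R \<subseteq> A \<and> card R = t} = card A choose t"
    using assms(1) by (rule n_subsets)
  also have "\<dots> \<le> card A ^ t"
    using True by (rule binomial_le_pow)
  also have "\<dots> \<le> q ^ t"
    using assms(2) by (rule power_mono) simp
  finally show ?thesis .
next
  case False
  then show ?thesis
    using assms(1) by (simp add: n_subsets binomial_eq_0)
qed

lemma exists_insert_subset:
  assumes "finite R" and "R \<subseteq> S" and "\<not> R \<subseteq> S'" and "card R \<le> card (S \<inter> S')"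
  shows "\<exists>e\<in>S' - R. insert e R \<subseteq> S"
proof (rule ccontr)
  assume "\<not> ?thesis"
  then have "S \<inter> S' \<subseteq> R \<inter> S'"
    using assms(2) by blast
  then have "card (S \<inter> S') \<le> card (R \<inter> S')"
    using \<open>finite R\<close> by (intro card_mono) auto
  also have "\<dots> < card R"
    using assms(1,3) by (intro psubset_card_mono) auto
  finally show False
    using assms(4) by simp
qed

lemma card_UN_image_le:
  assumes "finite I" and A: "\<And>i. i \<in> I \<Longrightarrow> finite (A i) \<and> card (A i) \<le> q"
  shows "finite (\<Union>i\<in>I. f i ` A i)" and "card (\<Union>i\<in>I. f i ` A i) \<le> card I * q"
proof -
  show "finite (\<Union>i\<in>I. f i ` A i)"
    using assms by auto
  have "card (\<Union>i\<in>I. f i ` A i) \<le> (\<Sum>i\<in>I. card (f i ` A i))"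
    using \<open>finite I\<close> by (rule card_UN_le)
  also have "\<dots> \<le> (\<Sum>i\<in>I. q)"
    using A by (intro sum_mono order.trans[OF card_image_le]) auto
  finally show "card (\<Union>i\<in>I. f i ` A i) \<le> card I * q"
    by simp
qed

lemma member_contains_insertion:
  fixes \<S> :: "'a set set"
  assumes inter: "\<forall>S\<in>\<S>. \<forall>S'\<in>\<S>. t \<le> card (S \<inter> S')" and "S \<in> \<S>" and "S0 \<in> \<S>"
    and avoid: "\<And>R. R \<subseteq> S0 \<Longrightarrow> card R = t \<Longrightarrow> avoid R \<in> \<S> \<and> \<not> R \<subseteq> avoid R"
  shows "\<exists>R. R \<subseteq> S0 \<and> card R = t \<and> (\<exists>e\<in>avoid R - R. insert e R \<subseteq> S)"
proof -
  have "t \<le> card (S \<inter> S0)"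
    using inter \<open>S \<in> \<S>\<close> \<open>S0 \<in> \<S>\<close> by blast
  then obtain R where R: "R \<subseteq> S \<inter> S0" "card R = t" "finite R"
    by (rule obtain_subset_with_card_n)
  then have "avoid R \<in> \<S>" and "\<not> R \<subseteq> avoid R"
    using avoid by auto
  then have "card R \<le> card (S \<inter> avoid R)"
    using inter \<open>S \<in> \<S>\<close> R(2) by blast
  then have "\<exists>e\<in>avoid R - R. insert e R \<subseteq> S"
    using exists_insert_subset[OF \<open>finite R\<close>] R(1) \<open>\<not> R \<subseteq> avoid R\<close> by blast
  then show ?thesis
    using R by blast
qed

text \<open>The cover consists of the sets R \<union> {e} where R is a t-subset of a fixed member S0 and
  e \<in> avoid R - R for a member avoid R not containing R.\<close>
lemma cover_of_t_intersecting_sets: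
  fixes \<S> :: "'a set set"
  assumes fin: "\<forall>S\<in>\<S>. finite S \<and> card S \<le> q"
    and inter: "\<forall>S\<in>\<S>. \<forall>S'\<in>\<S>. t \<le> card (S \<inter> S')"
    and no_kernel: "\<not> (\<exists>R. card R = t \<and> (\<forall>S\<in>\<S>. R \<subseteq> S))"
  obtains \<U> where "finite \<U>" "card \<U> \<le> q ^ (t+1)" "\<forall>U\<in>\<U>. card U = t+1"
    "\<forall>S\<in>\<S>. \<exists>U\<in>\<U>. U \<subseteq> S"
proof (cases "\<S> = {}")
  case True
  then show ?thesis
    using that[of "{}"] by simp
next
  case False
  then obtain S0 where "S0 \<in> \<S>"
    by blast
  then have S0: "finite S0" "card S0 \<le> q"
    using fin by auto
  define \<R> where "\<R> = {R. R \<subseteq> S0 \<and> card R = t}"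
  have "\<forall>R\<in>\<R>. \<exists>S. S \<in> \<S> \<and> \<not> R \<subseteq> S"
    using no_kernel unfolding \<R>_def by blast
  then obtain avoid where "\<And>R. R \<in> \<R> \<Longrightarrow> avoid R \<in> \<S> \<and> \<not> R \<subseteq> avoid R"
    using bchoice by metis
  then have avoid: "\<And>R. R \<subseteq> S0 \<Longrightarrow> card R = t \<Longrightarrow> avoid R \<in> \<S> \<and> \<not> R \<subseteq> avoid R"
    by (simp add: \<R>_def)
  define \<U> where "\<U> = (\<Union>R\<in>\<R>. (\<lambda>e. insert e R) ` (avoid R - R))"
  have R: "finite R" "card R = t" if "R \<in> \<R>" for R
    using that S0(1) finite_subset by (auto simp: \<R>_def)
  have "finite \<R>"
    by (rule finite_subset[of _ "Pow S0"]) (auto simp: \<R>_def S0(1))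
  have avoid_small: "finite (avoid R - R) \<and> card (avoid R - R) \<le> q" if "R \<in> \<R>" for R
    using fin avoid[of R] that card_mono[of "avoid R" "avoid R - R"] by (auto simp: \<R>_def)
  have "finite \<U>"
    unfolding \<U>_def using \<open>finite \<R>\<close> avoid_small by (rule card_UN_image_le)
  moreover have "card \<U> \<le> q ^ (t+1)"
  proof -
    have "card \<U> \<le> card \<R> * q"
      unfolding \<U>_def using \<open>finite \<R>\<close> avoid_small by (rule card_UN_image_le)
    also have "\<dots> \<le> q ^ (t+1)"
      using mult_le_mono1[OF card_subsets_le_power[OF S0, of t]] by (simp add: \<R>_def mult.commute)
    finally show ?thesis .
  qed
  moreover have "\<forall>U\<in>\<U>. card U = t+1"
    using R by (auto simp: \<U>_def)
  moreover have "\<exists>U\<in>\<U>. U \<subseteq> S" if "S \<in> \<S>" for S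
  proof -
    obtain R e where "R \<subseteq> S0" "card R = t" "e \<in> avoid R - R" "insert e R \<subseteq> S"
      using member_contains_insertion[OF inter \<open>S \<in> \<S>\<close> \<open>S0 \<in> \<S>\<close> avoid] by blast
    then show ?thesis
      by (auto simp: \<U>_def \<R>_def)
  qed
  ultimately show ?thesis
    by (intro that) blast+
qed

lemma card_le_uncovered_add:
  assumes F: "F \<subseteq> perfect_matchings n" and "finite \<U>" and "\<forall>U\<in>\<U>. card U = k"
    and cover: "\<forall>S\<in>\<S>. \<exists>U\<in>\<U>. U \<subseteq> S"
  shows "card F \<le> card {m\<in>F. \<forall>S\<in>\<S>. \<not> S \<subseteq> m} + card \<U> * odd_dfact (n - k)"
proof -
  let ?rest = "{m\<in>F. \<forall>S\<in>\<S>. \<not> S \<subseteq> m}" and ?covered = "{m\<in>F. \<exists>S\<in>\<S>. S \<subseteq> m}"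
  have "m \<in> (\<Union>U\<in>\<U>. restrict_fam F U)" if "m \<in> F" "S \<in> \<S>" "S \<subseteq> m" for m S
  proof -
    obtain U where "U \<in> \<U>" "U \<subseteq> S"
      using cover \<open>S \<in> \<S>\<close> by blast
    then show ?thesis
      using that by (auto simp: restrict_fam_def)
  qed
  then have "?covered \<subseteq> (\<Union>U\<in>\<U>. restrict_fam F U)"
    by blast
  moreover have "finite (\<Union>U\<in>\<U>. restrict_fam F U)"
    by (rule finite_subset[OF _ finite_subset_perfect_matchings[OF F]]) (auto simp: restrict_fam_def)
  ultimately have "card ?covered \<le> card (\<Union>U\<in>\<U>. restrict_fam F U)"
    by (rule card_mono[rotated])
  also have "\<dots> \<le> (\<Sum>U\<in>\<U>. card (restrict_fam F U))"
    using \<open>finite \<U>\<close> by (rule card_UN_le)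
  also have "\<dots> \<le> (\<Sum>U\<in>\<U>. odd_dfact (n - k))"
    using assms card_restrict_fam_le by (intro sum_mono) auto
  finally have covered: "card ?covered \<le> card \<U> * odd_dfact (n - k)"
    by simp
  have split: "?rest \<union> ?covered = F"
    by blast
  have "card F = card (?rest \<union> ?covered)"
    by (simp only: split)
  also have "\<dots> \<le> card ?rest + card ?covered"
    by (rule card_Un_le)
  finally show ?thesis
    using covered by linarith
qed

lemma card_Diff_restrict_fam_le_uncovered:
  assumes "F \<subseteq> perfect_matchings n" and "\<forall>S\<in>\<S>. R \<subseteq> S"
  shows "card (F - restrict_fam F R) \<le> card {m\<in>F. \<forall>S\<in>\<S>. \<not> S \<subseteq> m}"
proof (rule card_mono)
  show "finite {m\<in>F. \<forall>S\<in>\<S>. \<not> S \<subseteq> m}"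
    using finite_subset_perfect_matchings[OF assms(1)] by simp
  show "F - restrict_fam F R \<subseteq> {m\<in>F. \<forall>S\<in>\<S>. \<not> S \<subseteq> m}"
    using assms(2) by (auto simp: restrict_fam_def)
qed

lemma cores_have_common_kernel:
  assumes F: "F \<subseteq> perfect_matchings n"
    and cores: "\<forall>S\<in>\<S>. finite S \<and> card S \<le> q \<and> (\<exists>m\<in>F. S \<subseteq> m)"
    and inter: "\<forall>S\<in>\<S>. \<forall>S'\<in>\<S>. t \<le> card (S \<inter> S')"
    and rest: "card {m\<in>F. \<forall>S\<in>\<S>. \<not> S \<subseteq> m} \<le> odd_dfact (n-t-1)"
    and big: "(1 + q ^ (t+1)) * odd_dfact (n-t-1) < card F"
  shows "\<exists>T. disjoint_edges n T \<and> card T = t \<and> card (F - restrict_fam F T) \<le> odd_dfact (n-t-1)"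
proof (cases "\<exists>R. card R = t \<and> (\<forall>S\<in>\<S>. R \<subseteq> S)")
  case True
  then obtain R where R: "card R = t" "\<forall>S\<in>\<S>. R \<subseteq> S"
    by blast
  have "\<S> \<noteq> {}"
  proof
    assume "\<S> = {}"
    then have "card F \<le> odd_dfact (n-t-1)"
      using rest by simp
    moreover have "odd_dfact (n-t-1) \<le> (1 + q ^ (t+1)) * odd_dfact (n-t-1)"
      by simp
    ultimately show False
      using big by linarith
  qed
  then obtain S where "S \<in> \<S>"
    by blast
  then obtain m where "m \<in> F" "S \<subseteq> m"
    using cores by blast
  then have "disjoint_edges n R"
    using disjoint_edges_subset_perfect_matching[of m n R] F R(2) \<open>S \<in> \<S>\<close> by blast
  moreover have "card (F - restrict_fam F R) \<le> odd_dfact (n-t-1)"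
    using card_Diff_restrict_fam_le_uncovered[OF F R(2)] rest by (rule order.trans)
  ultimately show ?thesis
    using R(1) by blast
next
  case False
  have "\<forall>S\<in>\<S>. finite S \<and> card S \<le> q"
    using cores by blast
  then obtain \<U> where \<U>: "finite \<U>" "card \<U> \<le> q ^ (t+1)" "\<forall>U\<in>\<U>. card U = t+1"
    "\<forall>S\<in>\<S>. \<exists>U\<in>\<U>. U \<subseteq> S"
    using inter False by (rule cover_of_t_intersecting_sets)
  have "card F \<le> odd_dfact (n-t-1) + card \<U> * odd_dfact (n-t-1)"
    using card_le_uncovered_add[OF F \<U>(1,3,4)] rest by simp
  also have "\<dots> \<le> (1 + q ^ (t+1)) * odd_dfact (n-t-1)"
    using mult_le_mono1[OF \<U>(2), of "odd_dfact (n-t-1)"] by simp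
  finally have False
    using big by simp
  then show ?thesis ..
qed

lemma t_intersecting_stability:
  fixes r :: real
  assumes F: "F \<subseteq> perfect_matchings n" "t_intersecting t F" and r: "real n + real q < r"
    and small: "r ^ (q+1) * odd_dfact (n-(q+1)) \<le> odd_dfact (n-t-1)"
    and big: "(1 + q ^ (t+1)) * odd_dfact (n-t-1) < card F"
  shows "\<exists>T. disjoint_edges n T \<and> card T = t \<and> card (F - restrict_fam F T) \<le> odd_dfact (n-t-1)"
proof -
  have "r > 0"
    using r by (simp add: add_nonneg_pos order.strict_trans1)
  then obtain \<S> where pieces: "\<forall>S\<in>\<S>. \<exists>G. spread_piece F q r S G"
    and "card {m\<in>F. \<forall>S\<in>\<S>. \<not> S \<subseteq> m} \<le> real (odd_dfact (n-t-1))"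
    using spread_approximation[OF F(1) _ small] by blast
  then have rest: "card {m\<in>F. \<forall>S\<in>\<S>. \<not> S \<subseteq> m} \<le> odd_dfact (n-t-1)"
    by (simp only: of_nat_le_iff)
  have "t \<le> card (S \<inter> S')" if "S \<in> \<S>" "S' \<in> \<S>" for S S'
    using pieces that spread_piece_cores_intersect[OF F _ _ r] by blast
  moreover have "\<forall>S\<in>\<S>. finite S \<and> card S \<le> q \<and> (\<exists>m\<in>F. S \<subseteq> m)"
    using pieces by (fastforce simp: spread_piece_def restrict_fam_def)
  ultimately show ?thesis
    using cores_have_common_kernel[OF F(1) _ _ rest big] by blast
qed

section \<open>Choice of the parameters\<close>

lemma odd_dfact_add_ge: "(2*a+1) ^ b * odd_dfact a \<le> odd_dfact (a + b)"
proof (induction b)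
  case (Suc b)
  have "(2*a+1) ^ Suc b * odd_dfact a = (2*a+1) * ((2*a+1) ^ b * odd_dfact a)"
    by (simp only: power_Suc mult.assoc)
  also have "\<dots> \<le> (2*(a+b)+1) * ((2*a+1) ^ b * odd_dfact a)"
    by (intro mult_right_mono) auto
  also have "\<dots> \<le> (2*(a+b)+1) * odd_dfact (a + b)"
    using Suc.IH by (rule mult_le_mono2)
  finally show ?case
    by (simp add: odd_dfact_Suc)
qed simp

lemma power_le_six_fifths_power:
  fixes x :: real
  assumes "0 \<le> x" and "x \<le> 2 ^ L"
  shows "x ^ k \<le> (6/5) ^ (4*L*k)"
proof -
  have "x ^ k \<le> (2 ^ L) ^ k"
    using assms(2,1) by (rule power_mono)
  also have "\<dots> \<le> (((6/5) ^ 4) ^ L) ^ k"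
    by (intro power_mono) (auto simp: power_numeral_reduce)
  also have "\<dots> = (6/5) ^ (4*L*k)"
    by (simp only: power_mult)
  finally show ?thesis .
qed

text \<open>The q - t factors by which the two double factorials differ are at least 3n/2 each, and
  (6/5)^(q-t) \<ge> (5n/4)^(t+1) by the choice of q.\<close>
lemma power_odd_dfact_le:
  fixes n q t L :: nat
  assumes n: "4*q+2 \<le> n" and q: "q = t + 4*(t+1)*L" and L: "2*n \<le> 2^L"
  shows "(5*n/4) ^ (q+1) * odd_dfact (n-(q+1)) \<le> odd_dfact (n-(t+1))"
proof -
  define a b where "a = n-(q+1)" and "b = q-t"
  have b: "b = 4*L*(t+1)"
    using q by (simp add: b_def algebra_simps)
  have "real (2*n) \<le> 2 ^ L"
    using L by (metis of_nat_le_iff of_nat_numeral of_nat_power)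
  then have "5*n/4 \<le> (2::real) ^ L"
    by simp
  then have small_power: "(5*n/4) ^ (t+1) \<le> (6/5) ^ b"
    unfolding b by (rule power_le_six_fifths_power[rotated]) simp
  have "q+1 = (t+1) + b"
    using q by (simp add: b_def)
  then have "(5*n/4) ^ (q+1) = (5*n/4) ^ (t+1) * (5*n/4) ^ b"
    by (simp only: power_add)
  also have "\<dots> \<le> (6/5) ^ b * (5*n/4) ^ b"
    using small_power by (rule mult_right_mono) simp
  also have "\<dots> = (3*n/2) ^ b"
    by (simp flip: power_mult_distrib)
  also have "\<dots> \<le> real (2*a+1) ^ b"
    using n by (intro power_mono) (auto simp: a_def of_nat_diff)
  finally have "(5*n/4) ^ (q+1) * odd_dfact a \<le> real (2*a+1) ^ b * odd_dfact a"
    by (rule mult_right_mono) simp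
  also have "\<dots> = real ((2*a+1) ^ b * odd_dfact a)"
    by simp
  also have "\<dots> \<le> odd_dfact (n-(t+1))"
  proof -
    have "n-(t+1) = a + b"
      using n q by (simp add: a_def b_def)
    then have "(2*a+1) ^ b * odd_dfact a \<le> odd_dfact (n-(t+1))"
      using odd_dfact_add_ge[of a b] by metis
    then show ?thesis
      by (simp only: of_nat_le_iff)
  qed
  finally show ?thesis
    by (simp add: a_def)
qed

lemma eventually_log_bounds:
  fixes c :: real and t :: nat
  assumes "c > 0"
  defines "q \<equiv> \<lambda>n. t + 4*(t+1)*(floor_log n + 2)"
  shows "\<forall>\<^sub>F n in sequentially. 4 * q n + 2 \<le> n \<and> 1 + real (q n) ^ (t+1) < c * real (2*(n-t-1)+1)"
proof -
  define Q where "Q x = real t + 4*(real t+1)*(log 2 x + 2)" for x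
  have "\<forall>\<^sub>F x in at_top. 4 * Q x + 2 \<le> x"
    unfolding Q_def by real_asymp
  moreover have "\<forall>\<^sub>F x in at_top. 1 + Q x ^ (t+1) < c * (2*x - 2*t - 1)"
    unfolding Q_def using \<open>c > 0\<close> by real_asymp
  moreover have "\<forall>\<^sub>F x in at_top. real t + 1 \<le> x"
    by real_asymp
  ultimately have "\<forall>\<^sub>F x in at_top. 4 * Q x + 2 \<le> x \<and> 1 + Q x ^ (t+1) < c * (2*x - 2*t - 1)
      \<and> real t + 1 \<le> x"
    by eventually_elim blast
  then have "\<forall>\<^sub>F n in sequentially. 4 * Q n + 2 \<le> n \<and> 1 + Q n ^ (t+1) < c * (2*real n - 2*t - 1)
      \<and> real t + 1 \<le> n"
    by (rule eventually_compose_filterlim[OF _ filterlim_real_sequentially])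
  then show ?thesis
  proof eventually_elim
    case (elim n)
    have "real (floor_log n) \<le> log 2 n"
      using elim by (simp add: floor_log_altdef)
    moreover have "Q n - real (q n) = 4*(real t+1) * (log 2 n - floor_log n)"
      by (simp add: q_def Q_def algebra_simps)
    ultimately have q_le: "real (q n) \<le> Q n"
      by (metis diff_ge_0_iff_ge mult_nonneg_nonneg of_nat_0_le_iff of_nat_Suc add.commute
          zero_le_numeral)
    then have "real (4 * q n + 2) \<le> real n"
      using elim by simp
    moreover have "real (2*(n-t-1)+1) = 2*n - 2*t - 1"
      using elim by (simp add: of_nat_diff)
    then have "1 + real (q n) ^ (t+1) < c * real (2*(n-t-1)+1)"
      using elim power_mono[OF q_le, of "t+1"] by simp
    ultimately show ?case
      by (simp only: of_nat_le_iff)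
  qed
qed

lemma eventually_spread_parameters:
  fixes c :: real
  assumes "c > 0"
  shows "\<forall>\<^sub>F n in sequentially. \<exists>q::nat. \<exists>r>real n + real q.
    r ^ (q+1) * odd_dfact (n-(q+1)) \<le> odd_dfact (n-t-1) \<and>
    (1 + real q ^ (t+1)) * odd_dfact (n-t-1) < c * odd_dfact (n-t)"
  using eventually_log_bounds[OF assms, of t]
proof eventually_elim
  case (elim n)
  define L where "L = floor_log n + 2"
  define q where "q = t + 4*(t+1)*L"
  have n: "4*q+2 \<le> n" and q: "1 + real q ^ (t+1) < c * real (2*(n-t-1)+1)"
    using elim unfolding q_def L_def by blast+
  have "2*n \<le> 2 ^ L"
    using floor_log_exp2_gt[of n] by (simp add: L_def power_add)
  then have "(5*n/4) ^ (q+1) * odd_dfact (n-(q+1)) \<le> odd_dfact (n-t-1)"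
    using power_odd_dfact_le[OF n q_def] by simp
  moreover have "(1 + real q ^ (t+1)) * odd_dfact (n-t-1) < c * odd_dfact (n-t)"
  proof -
    have "odd_dfact (n-t-1) > 0"
      by (simp add: odd_dfact_def)
    then have "(1 + real q ^ (t+1)) * odd_dfact (n-t-1) < c * real (2*(n-t-1)+1) * odd_dfact (n-t-1)"
      using q by (intro mult_strict_right_mono) auto
    also have "\<dots> = c * odd_dfact (n-t)"
    proof -
      have "n - t = Suc (n-t-1)"
        using n by (simp add: q_def)
      then have eq: "odd_dfact (n-t) = (2*(n-t-1)+1) * odd_dfact (n-t-1)"
        by (metis odd_dfact_Suc)
      show ?thesis
        by (simp only: eq of_nat_mult mult.assoc)
    qed
    finally show ?thesis .
  qed
  moreover have "real n + q < 5*n/4"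
    using n by linarith
  ultimately show ?case
    by blast
qed

theorem mainTheorem14:
  fixes c :: real and t :: nat
  assumes "0 < c" and "c < 1"
  shows "\<exists>n0::nat. \<exists>C::real. C > 0 \<and>
    (\<forall>n\<ge>n0. \<forall>F. F \<subseteq> perfect_matchings n \<and> t_intersecting t F
        \<and> real (card F) \<ge> c * real (odd_dfact (n - t))
      \<longrightarrow> (\<exists>T. disjoint_edges n T \<and> card T = t \<and>
             real (card (F - restrict_fam F T)) \<le> C * real (odd_dfact (n - t - 1))))"
proof -
  obtain n0 where n0: "\<And>n. n \<ge> n0 \<Longrightarrow> \<exists>q::nat. \<exists>r>real n + real q.
      r ^ (q+1) * odd_dfact (n-(q+1)) \<le> odd_dfact (n-t-1) \<and>
      (1 + real q ^ (t+1)) * odd_dfact (n-t-1) < c * odd_dfact (n-t)"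
    using eventually_spread_parameters[OF \<open>0 < c\<close>, of t] by (auto simp: eventually_sequentially)
  show ?thesis
  proof (intro exI[of _ n0] exI[of _ "1::real"] conjI allI impI)
    fix n F
    assume "n0 \<le> n" and "F \<subseteq> perfect_matchings n \<and> t_intersecting t F
      \<and> real (card F) \<ge> c * real (odd_dfact (n - t))"
    then have F: "F \<subseteq> perfect_matchings n" "t_intersecting t F"
      and "c * odd_dfact (n - t) \<le> card F"
      by blast+
    obtain q r where r: "real n + real q < r"
      and small: "r ^ (q+1) * odd_dfact (n-(q+1)) \<le> odd_dfact (n-t-1)"
      and large: "(1 + real q ^ (t+1)) * odd_dfact (n-t-1) < c * odd_dfact (n-t)"
      using n0[OF \<open>n0 \<le> n\<close>] by blast
    have "real ((1 + q ^ (t+1)) * odd_dfact (n-t-1)) < real (card F)"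
      using large \<open>c * odd_dfact (n - t) \<le> card F\<close>
      by (simp only: of_nat_mult of_nat_add of_nat_1 of_nat_power)
    then have "(1 + q ^ (t+1)) * odd_dfact (n-t-1) < card F"
      by (simp only: of_nat_less_iff)
    then obtain T where "disjoint_edges n T" "card T = t"
      and "card (F - restrict_fam F T) \<le> odd_dfact (n-t-1)"
      using t_intersecting_stability[OF F r small] by blast
    then show "\<exists>T. disjoint_edges n T \<and> card T = t \<and>
      real (card (F - restrict_fam F T)) \<le> 1 * real (odd_dfact (n - t - 1))"
      by auto
  qed simp
qed

end
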